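(* Let $\alpha\in(0,1)$, let $J=[0,T]$ for some $T>0$ or $J=[0,\infty)$, and let $f:J\times\mathbb{R}\to\mathbb{R}$ be continuous and satisfy the Lipschitz condition: there is a continuous function $L:J\to[0,\infty)$ with $|f(t,x)-f(t,y)|\le L(t)|x-y|$ for all $t\in J$ and all $x,y\in\mathbb{R}$. Consider the one-dimensional fractional differential equation ${}^{C}D^\alpha_{0+}x(t)=f(t,x(t))$, $t\in J$. Then for any two initial values $x_{10}\neq x_{20}$ in $\mathbb{R}$, the solutions $x_1(\cdot),x_2(\cdot)$ with $x_1(0)=x_{10}$, $x_2(0)=x_{20}$ satisfy $x_1(t)\neq x_2(t)$ for all $t\in J$.
   Context: ${}^{C}D^\alpha_{0+}$ denotes the Caputo fractional derivative of order $\alpha\in(0,1)$: ${}^{C}D^\alpha_{0+}x(t)=\frac{1}{\Gamma(1-\alpha)}\int_0^t(t-\tau)^{-\alpha}x'(\tau)\,d\tau$. A solution is a continuous function $x:J\to\mathbb{R}$ satisfying the equation for all $0<t\in J$; equivalently, $x$ is continuous and $x(t)=x(0)+\frac{1}{\Gamma(\alpha)}\int_0^t(t-\tau)^{\alpha-1}f(\tau,x(\tau))\,d\tau$ for all $t\in J$. Under the stated Lipschitz condition, for each initial value there is a unique solution defined on all of $J$. *)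

theory Defs
  imports "HOL-Analysis.Analysis"
begin

text \<open>A solution of the Caputo fractional differential equation
  D^alpha x(t) = f(t, x(t)) on the interval J, in the (equivalent, as stated in
  the paper's context) Volterra integral form:
  x is continuous on J and for every t in J,
  x(t) = x(0) + 1/Gamma(alpha) * integral_0^t (t - s)^(alpha - 1) f(s, x(s)) ds.\<close>
definition caputo_solution ::
  "real \<Rightarrow> (real \<Rightarrow> real \<Rightarrow> real) \<Rightarrow> real set \<Rightarrow> (real \<Rightarrow> real) \<Rightarrow> bool" where
  "caputo_solution \<alpha> f J x \<longleftrightarrow>
     continuous_on J x \<and>
     (\<forall>t\<in>J. ((\<lambda>s. (t - s) powr (\<alpha> - 1) * f s (x s)) has_integral
                 (Gamma \<alpha> * (x t - x 0))) {0..t})"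

end

theory Submission
  imports Defs
begin

text \<open>Suppose \<open>d = x\<^sub>1 - x\<^sub>2\<close> starts positive and first vanishes at \<open>t\<^sub>1\<close>. Then
  \<open>h = f(\<cdot>, x\<^sub>1) - f(\<cdot>, x\<^sub>2)\<close> is continuous with \<open>h(t\<^sub>1) = 0\<close>, and
  \<open>\<Gamma>(\<alpha>) (d(t) - d(0)) = \<integral>\<^sub>0\<^sup>t (t - s)\<^sup>\<alpha>\<^sup>-\<^sup>1 h(s) ds\<close>. Integrating against the complementary
  kernel \<open>(\<tau> - s)\<^sup>-\<^sup>\<alpha>\<close> gives, for \<open>P(\<tau>) = \<integral>\<^sub>0\<^sup>\<tau> (\<tau> - s)\<^sup>-\<^sup>\<alpha> d(s) ds\<close>,
  \<open>\<Gamma>(\<alpha>) P(\<tau>) = B(\<alpha>, 1 - \<alpha>) \<integral>\<^sub>0\<^sup>\<tau> h + \<Gamma>(\<alpha>) d(0) \<tau>\<^sup>1\<^sup>-\<^sup>\<alpha> / (1 - \<alpha>)\<close>, so just below \<open>t\<^sub>1\<close> the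
  function \<open>P\<close> grows at a rate bounded below by a positive constant. But \<open>d \<ge> 0\<close> on \<open>[0, t\<^sub>1]\<close> and, because
  \<open>h(t\<^sub>1) = 0\<close>, \<open>d(s) = o((t\<^sub>1 - s)\<^sup>\<alpha>)\<close> as \<open>s \<rightarrow> t\<^sub>1\<close>, which makes \<open>P\<close> grow arbitrarily slowly
  there.\<close>

lemma has_integral_kernel_powr:
  fixes a b c \<beta> :: real
  assumes "a \<le> c" "c \<le> b" "0 < \<beta>"
  shows "((\<lambda>r. (b - r) powr (\<beta> - 1)) has_integral ((b - a) powr \<beta> - (b - c) powr \<beta>) / \<beta>) {a..c}"
proof -
  have "((\<lambda>r. (b - r) powr (\<beta> - 1)) has_integral
      (- ((b - c) powr \<beta>) / \<beta>) - (- ((b - a) powr \<beta>) / \<beta>)) {a..c}"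
  proof (rule fundamental_theorem_of_calculus_interior[OF assms(1)])
    show "continuous_on {a..c} (\<lambda>r. - ((b - r) powr \<beta>) / \<beta>)"
      using assms by (intro continuous_intros continuous_on_powr') auto
    fix x assume "x \<in> {a<..<c}"
    then show "((\<lambda>r. - ((b - r) powr \<beta>) / \<beta>) has_vector_derivative (b - x) powr (\<beta> - 1)) (at x)"
      unfolding has_real_derivative_iff_has_vector_derivative[symmetric]
      using assms by (auto intro!: derivative_eq_intros simp: field_simps)
  qed
  then show ?thesis by (simp add: diff_divide_distrib)
qed

lemma has_integral_kernel_powr_endpoint:
  fixes a b \<beta> :: real
  assumes "a \<le> b" "0 < \<beta>"
  shows "((\<lambda>r. (b - r) powr (\<beta> - 1)) has_integral (b - a) powr \<beta> / \<beta>) {a..b}"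
  using has_integral_kernel_powr[OF assms(1) order.refl assms(2)] by simp

lemma absolutely_integrable_nonneg_mult_continuous:
  fixes h k :: "real \<Rightarrow> real"
  assumes "continuous_on {a..b} h" and "k integrable_on {a..b}"
    and "\<And>r. r \<in> {a..b} \<Longrightarrow> 0 \<le> k r"
  shows "(\<lambda>r. k r * h r) absolutely_integrable_on {a..b}"
proof -
  have "k absolutely_integrable_on {a..b}"
    using assms(2,3) by (subst absolutely_integrable_on_iff_nonneg) auto
  moreover have "h \<in> borel_measurable (lebesgue_on {a..b})"
    using assms(1) by (intro continuous_imp_measurable_on_sets_lebesgue) auto
  moreover have "bounded (h ` {a..b})"
    using assms(1) by (intro compact_imp_bounded compact_continuous_image) auto
  ultimately have "(\<lambda>r. h r * k r) absolutely_integrable_on {a..b}"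
    by (intro absolutely_integrable_bounded_measurable_product_real) auto
  then show ?thesis by (simp add: mult.commute)
qed

lemma abs_integral_nonneg_mult_le:
  fixes h k :: "real \<Rightarrow> real"
  assumes "continuous_on {a..b} h" and k: "(k has_integral K) {a..b}"
    and k_nonneg: "\<And>r. r \<in> {a..b} \<Longrightarrow> 0 \<le> k r"
    and h_bound: "\<And>r. r \<in> {a..b} \<Longrightarrow> \<bar>h r\<bar> \<le> B"
  shows "\<bar>integral {a..b} (\<lambda>r. k r * h r)\<bar> \<le> K * B"
proof -
  have "(\<lambda>r. k r * h r) integrable_on {a..b}"
    using absolutely_integrable_nonneg_mult_continuous[OF assms(1) _ k_nonneg] k
    by (auto simp: absolutely_integrable_on_def)
  moreover have "((\<lambda>r. k r * B) has_integral K * B) {a..b}"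
    using has_integral_mult_left[OF k] .
  moreover have "norm (k r * h r) \<le> k r * B" if "r \<in> {a..b}" for r
    using k_nonneg[OF that] h_bound[OF that] by (simp add: abs_mult mult_left_mono)
  ultimately show ?thesis
    using integral_norm_bound_integral[of "\<lambda>r. k r * h r" "{a..b}" "\<lambda>r. k r * B"]
      integral_unique[OF k] by (auto simp: has_integral_integrable)
qed

text \<open>\<open>abel_integral \<beta> h\<close> is \<open>\<Gamma>(\<beta>)\<close> times the Riemann--Liouville integral of order
  \<open>\<beta>\<close> of \<open>h\<close>; a solution \<open>x\<close> of the Caputo equation satisfies
  \<open>abel_integral \<alpha> (\<lambda>s. f s (x s)) t = \<Gamma>(\<alpha>) (x t - x 0)\<close>.\<close>

definition abel_integral :: "real \<Rightarrow> (real \<Rightarrow> real) \<Rightarrow> real \<Rightarrow> real" where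
  "abel_integral \<beta> h t = integral {0..t} (\<lambda>s. (t - s) powr (\<beta> - 1) * h s)"

lemma absolutely_integrable_abel_kernel:
  fixes a t \<beta> :: real and h :: "real \<Rightarrow> real"
  assumes "0 < \<beta>" "a \<le> t" "continuous_on {a..t} h"
  shows "(\<lambda>s. (t - s) powr (\<beta> - 1) * h s) absolutely_integrable_on {a..t}"
  using assms has_integral_kernel_powr_endpoint[of a t \<beta>]
  by (intro absolutely_integrable_nonneg_mult_continuous) auto

lemma has_integral_abel_integral:
  fixes t \<beta> :: real and h :: "real \<Rightarrow> real"
  assumes "0 < \<beta>" "0 \<le> t" "continuous_on {0..t} h"
  shows "((\<lambda>s. (t - s) powr (\<beta> - 1) * h s) has_integral abel_integral \<beta> h t) {0..t}"
  using absolutely_integrable_abel_kernel[OF assms] unfolding abel_integral_def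
  by (auto simp: absolutely_integrable_on_def)

lemma has_integral_Beta_kernel:
  fixes \<alpha> r t :: real
  assumes a: "0 < \<alpha>" "\<alpha> < 1" and rt: "r < t"
  shows "((\<lambda>s. (t - s) powr (-\<alpha>) * (s - r) powr (\<alpha> - 1)) has_integral Beta \<alpha> (1 - \<alpha>)) {r..t}"
proof -
  define m where "m = 1 / (t - r)"
  define c where "c = - r / (t - r)"
  have m: "m > 0" using rt by (simp add: m_def)
  have B: "((\<lambda>u. u powr (\<alpha> - 1) * (1 - u) powr ((1 - \<alpha>) - 1)) has_integral Beta \<alpha> (1 - \<alpha>)) (cbox 0 1)"
    using has_integral_Beta_real[of \<alpha> "1 - \<alpha>"] a by simp
  have e0: "(0 - c) /\<^sub>R m = r" "(1 - c) /\<^sub>R m = t"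
    "Beta \<alpha> (1 - \<alpha>) /\<^sub>R m ^ DIM(real) = (t - r) * Beta \<alpha> (1 - \<alpha>)"
    using rt by (auto simp: m_def c_def field_simps)
  have affine: "((\<lambda>x. (m * x + c) powr (\<alpha> - 1) * (1 - (m * x + c)) powr ((1 - \<alpha>) - 1)) has_integral
      (t - r) * Beta \<alpha> (1 - \<alpha>)) {r..t}"
    using has_integral_affinity'[OF B m, of c] unfolding e0 cbox_interval by simp
  have "((\<lambda>x. (t - r) * ((t - x) powr (-\<alpha>) * (x - r) powr (\<alpha> - 1))) has_integral
      (t - r) * Beta \<alpha> (1 - \<alpha>)) {r..t}"
  proof (rule has_integral_eq[OF _ affine])
    fix x assume x: "x \<in> {r..t}"
    have e1: "m * x + c = (x - r) / (t - r)" using rt by (simp add: m_def c_def diff_divide_distrib)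
    have e2: "1 - (x - r) / (t - r) = (t - x) / (t - r)" using rt by (simp add: field_simps)
    have e3: "(t - r) powr (\<alpha> - 1) * (t - r) powr (- \<alpha>) = 1 / (t - r)"
      using rt by (simp add: powr_diff powr_minus field_simps)
    have "(m * x + c) powr (\<alpha> - 1) * (1 - (m * x + c)) powr ((1 - \<alpha>) - 1)
        = ((x - r) powr (\<alpha> - 1) * (t - x) powr (- \<alpha>)) / ((t - r) powr (\<alpha> - 1) * (t - r) powr (- \<alpha>))"
      using x rt unfolding e1 e2 by (simp add: powr_divide)
    also have "\<dots> = (t - r) * ((t - x) powr (-\<alpha>) * (x - r) powr (\<alpha> - 1))"
      unfolding e3 using rt by simp
    finally show "(m * x + c) powr (\<alpha> - 1) * (1 - (m * x + c)) powr ((1 - \<alpha>) - 1)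
        = (t - r) * ((t - x) powr (-\<alpha>) * (x - r) powr (\<alpha> - 1))" .
  qed
  then show ?thesis
    using has_integral_cmul_iff[of "t - r" "\<lambda>s. (t - s) powr (-\<alpha>) * (s - r) powr (\<alpha> - 1)"] rt
    by simp
qed

lemma abel_integral_nonneg:
  fixes \<alpha> s :: real and h :: "real \<Rightarrow> real"
  assumes "0 < \<alpha>" "continuous_on UNIV h" "\<And>r. 0 \<le> h r"
  shows "0 \<le> abel_integral \<alpha> h s"
proof (cases "0 \<le> s")
  case True
  with assms show ?thesis
    by (intro has_integral_nonneg[OF has_integral_abel_integral]) (auto intro: continuous_on_subset)
qed (simp add: abel_integral_def)

lemma nn_integral_abel_integral:
  fixes \<alpha> s :: real and h :: "real \<Rightarrow> real"
  assumes "0 < \<alpha>" "continuous_on UNIV h" "\<And>r. 0 \<le> h r"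
  shows "(\<integral>\<^sup>+r. ennreal (indicator {0..s} r * ((s - r) powr (\<alpha> - 1) * h r)) \<partial>lborel)
    = ennreal (abel_integral \<alpha> h s)"
proof (cases "0 \<le> s")
  case True
  with assms show ?thesis
    by (intro nn_integral_has_integral_lebesgue has_integral_abel_integral)
       (auto intro: continuous_on_subset)
qed (simp add: abel_integral_def)

lemma borel_measurable_abel_integral:
  fixes \<alpha> :: real and h :: "real \<Rightarrow> real"
  assumes "0 < \<alpha>" "continuous_on UNIV h" "\<And>r. 0 \<le> h r"
  shows "abel_integral \<alpha> h \<in> borel_measurable borel"
proof -
  have [measurable]: "h \<in> borel_measurable borel"
    using assms(2) by (rule borel_measurable_continuous_onI)
  have "abel_integral \<alpha> h s = enn2real (\<integral>\<^sup>+r. ennreal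
      (if 0 \<le> r \<and> r \<le> s then (s - r) powr (\<alpha> - 1) * h r else 0) \<partial>lborel)" for s
  proof -
    have "(\<integral>\<^sup>+r. ennreal (if 0 \<le> r \<and> r \<le> s then (s - r) powr (\<alpha> - 1) * h r else 0) \<partial>lborel)
      = (\<integral>\<^sup>+r. ennreal (indicator {0..s} r * ((s - r) powr (\<alpha> - 1) * h r)) \<partial>lborel)"
      by (intro nn_integral_cong) (simp add: indicator_def)
    then show ?thesis
      using nn_integral_abel_integral[OF assms, of s] abel_integral_nonneg[OF assms, of s] by simp
  qed
  then have "abel_integral \<alpha> h = (\<lambda>s. enn2real (\<integral>\<^sup>+r. ennreal
      (if 0 \<le> r \<and> r \<le> s then (s - r) powr (\<alpha> - 1) * h r else 0) \<partial>lborel))"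
    by auto
  also have "\<dots> \<in> borel_measurable borel" by measurable
  finally show ?thesis .
qed

text \<open>Composing with the kernel \<open>(t - s)\<^sup>-\<^sup>\<alpha>\<close> undoes \<open>abel_integral \<alpha>\<close> up to an ordinary
  integral (the semigroup law \<open>I\<^sup>1\<^sup>-\<^sup>\<alpha> I\<^sup>\<alpha> = I\<^sup>1\<close>); for nonnegative \<open>h\<close> this is Tonelli's
  theorem, the inner integral being a Beta integral.\<close>

lemma has_integral_abel_integral_composition_nonneg:
  fixes \<alpha> t :: real and h :: "real \<Rightarrow> real"
  assumes a: "0 < \<alpha>" "\<alpha> < 1" and "0 \<le> t" and hc: "continuous_on UNIV h"
    and h_nonneg: "\<And>r. 0 \<le> h r"
  shows "((\<lambda>s. (t - s) powr (-\<alpha>) * abel_integral \<alpha> h s)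
          has_integral Beta \<alpha> (1 - \<alpha>) * integral {0..t} h) {0..t}"
proof -
  define B where "B = Beta \<alpha> (1 - \<alpha>)"
  have [measurable]: "h \<in> borel_measurable borel"
    using hc by (rule borel_measurable_continuous_onI)
  have [measurable]: "abel_integral \<alpha> h \<in> borel_measurable borel"
    using borel_measurable_abel_integral[OF a(1) hc h_nonneg] .
  have A_nonneg: "\<And>s. 0 \<le> abel_integral \<alpha> h s"
    using abel_integral_nonneg[OF a(1) hc h_nonneg] .
  have B_pos: "0 < B" using a by (simp add: B_def Beta_def Gamma_real_pos)
  define F where "F s r = (if 0 \<le> s \<and> s \<le> t \<and> 0 \<le> r \<and> r \<le> s then
      (t - s) powr (-\<alpha>) * ((s - r) powr (\<alpha> - 1) * h r) else 0)" for s r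
  have "(\<lambda>(s, r). ennreal (F s r)) \<in> borel_measurable (lborel \<Otimes>\<^sub>M lborel)"
    unfolding F_def by measurable
  from lborel_pair.Fubini'[OF this]
  have Tonelli: "(\<integral>\<^sup>+s. (\<integral>\<^sup>+r. ennreal (F s r) \<partial>lborel) \<partial>lborel)
      = (\<integral>\<^sup>+r. (\<integral>\<^sup>+s. ennreal (F s r) \<partial>lborel) \<partial>lborel)"
    by simp
  have inner_s: "(\<integral>\<^sup>+r. ennreal (F s r) \<partial>lborel)
      = ennreal (indicator {0..t} s * ((t - s) powr (-\<alpha>) * abel_integral \<alpha> h s))" for s
  proof (cases "0 \<le> s \<and> s \<le> t")
    case True
    have "(\<integral>\<^sup>+r. ennreal (F s r) \<partial>lborel) = (\<integral>\<^sup>+r. ennreal ((t - s) powr (-\<alpha>)) *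
        ennreal (indicator {0..s} r * ((s - r) powr (\<alpha> - 1) * h r)) \<partial>lborel)"
      using True h_nonneg
      by (intro nn_integral_cong) (auto simp: F_def indicator_def ennreal_mult[symmetric])
    also have "\<dots> = ennreal ((t - s) powr (-\<alpha>)) * ennreal (abel_integral \<alpha> h s)"
      by (simp add: nn_integral_cmult nn_integral_abel_integral[OF a(1) hc h_nonneg])
    finally show ?thesis
      using True A_nonneg[of s] by (simp add: ennreal_mult[symmetric])
  qed (auto simp: F_def)
  have inner_r: "(\<integral>\<^sup>+s. ennreal (F s r) \<partial>lborel) = ennreal (indicator {0..t} r * (B * h r))"
    if "r \<noteq> t" for r
  proof (cases "0 \<le> r \<and> r < t")
    case True
    have "(\<integral>\<^sup>+s. ennreal (F s r) \<partial>lborel) = (\<integral>\<^sup>+s. ennreal (h r) *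
        ennreal (indicator {r..t} s * ((t - s) powr (-\<alpha>) * (s - r) powr (\<alpha> - 1))) \<partial>lborel)"
      using True h_nonneg
      by (intro nn_integral_cong) (auto simp: F_def indicator_def ennreal_mult[symmetric] mult_ac)
    also have "\<dots> = ennreal (h r) * ennreal B"
      using nn_integral_has_integral_lebesgue[OF _ has_integral_Beta_kernel[OF a, of r t]] True
      by (simp add: nn_integral_cmult B_def)
    finally show ?thesis
      using True h_nonneg[of r] B_pos by (simp add: ennreal_mult[symmetric] mult_ac)
  next
    case False
    with that have "r < 0 \<or> t < r" by auto
    then have "\<And>s. F s r = 0" by (auto simp: F_def)
    then show ?thesis using False that by (auto simp: indicator_def)
  qed
  have "((\<lambda>r. B * h r) has_integral B * integral {0..t} h) {0..t}"
    using integrable_continuous_interval[OF continuous_on_subset[OF hc]]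
    by (intro has_integral_mult_right) (auto simp: has_integral_iff)
  then have outer: "(\<integral>\<^sup>+r. ennreal (indicator {0..t} r * (B * h r)) \<partial>lborel)
      = ennreal (B * integral {0..t} h)"
    by (rule nn_integral_has_integral_lebesgue[rotated]) (use h_nonneg B_pos in auto)
  have "(\<integral>\<^sup>+s. ennreal (indicator {0..t} s * ((t - s) powr (-\<alpha>) * abel_integral \<alpha> h s)) \<partial>lborel)
      = (\<integral>\<^sup>+r. (\<integral>\<^sup>+s. ennreal (F s r) \<partial>lborel) \<partial>lborel)"
    by (simp add: inner_s[symmetric] Tonelli)
  also have "\<dots> = ennreal (B * integral {0..t} h)"
    unfolding outer[symmetric]
    by (intro nn_integral_cong_AE eventually_mono[OF AE_lborel_singleton[of t]] inner_r) simp
  finally have nn: "(\<integral>\<^sup>+s. ennreal (indicator {0..t} s *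
      ((t - s) powr (-\<alpha>) * abel_integral \<alpha> h s)) \<partial>lborel) = ennreal (B * integral {0..t} h)" .
  have "0 \<le> B * integral {0..t} h"
    using B_pos h_nonneg by (intro mult_nonneg_nonneg integral_nonneg integrable_continuous_interval
        continuous_on_subset[OF hc]) auto
  moreover have "(\<lambda>s. indicator {0..t} s * ((t - s) powr (-\<alpha>) * abel_integral \<alpha> h s))
      \<in> borel_measurable borel"
    by measurable
  ultimately have "((\<lambda>s. indicator {0..t} s * ((t - s) powr (-\<alpha>) * abel_integral \<alpha> h s))
      has_integral B * integral {0..t} h) UNIV"
    using nn_integral_has_integral[OF _ _ nn] A_nonneg by (simp add: indicator_def)
  moreover have "(\<lambda>s. indicator {0..t} s * ((t - s) powr (-\<alpha>) * abel_integral \<alpha> h s))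
      = (\<lambda>s. if s \<in> {0..t} then (t - s) powr (-\<alpha>) * abel_integral \<alpha> h s else 0)"
    by (auto simp: indicator_def)
  ultimately have "((\<lambda>s. if s \<in> {0..t} then (t - s) powr (-\<alpha>) * abel_integral \<alpha> h s else 0)
      has_integral B * integral {0..t} h) UNIV"
    by (simp only:)
  then show ?thesis
    unfolding B_def has_integral_restrict_UNIV .
qed

lemma has_integral_abel_integral_composition:
  fixes \<alpha> t :: real and h :: "real \<Rightarrow> real"
  assumes a: "0 < \<alpha>" "\<alpha> < 1" and t: "0 \<le> t" and hc: "continuous_on {0..t} h"
  shows "((\<lambda>s. (t - s) powr (-\<alpha>) * abel_integral \<alpha> h s)
          has_integral Beta \<alpha> (1 - \<alpha>) * integral {0..t} h) {0..t}"
proof -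
  define g where "g r = h (max 0 (min t r))" for r
  have gc: "continuous_on UNIV g"
    unfolding g_def using t
    by (intro continuous_on_compose2[OF hc] continuous_intros) auto
  have g_eq: "g r = h r" if "r \<in> {0..t}" for r
    using that by (simp add: g_def)
  define gp where "gp r = max (g r) 0" for r
  define gn where "gn r = max (- g r) 0" for r
  have gpc: "continuous_on UNIV gp" and gnc: "continuous_on UNIV gn"
    unfolding gp_def gn_def using gc by (auto intro: continuous_intros)
  have g_split: "g r = gp r - gn r" for r by (simp add: gp_def gn_def)
  have A_split: "abel_integral \<alpha> h s = abel_integral \<alpha> gp s - abel_integral \<alpha> gn s"
    if "s \<in> {0..t}" for s
  proof -
    have "abel_integral \<alpha> h s = abel_integral \<alpha> g s"
      unfolding abel_integral_def using that by (intro integral_cong) (simp add: g_eq)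
    also have "\<dots> = abel_integral \<alpha> gp s - abel_integral \<alpha> gn s"
      unfolding abel_integral_def g_split right_diff_distrib using that
      by (intro integral_diff integrable_integral has_integral_integrable[OF has_integral_abel_integral]
          a continuous_on_subset[OF gpc] continuous_on_subset[OF gnc]) auto
    finally show ?thesis .
  qed
  have I_split: "integral {0..t} h = integral {0..t} gp - integral {0..t} gn"
  proof -
    have "integral {0..t} h = integral {0..t} g"
      by (intro integral_cong) (simp add: g_eq)
    also have "\<dots> = integral {0..t} gp - integral {0..t} gn"
      unfolding g_split[abs_def]
      by (intro integral_diff integrable_continuous_interval continuous_on_subset[OF gpc]
          continuous_on_subset[OF gnc]) auto
    finally show ?thesis .
  qed
  have "((\<lambda>s. (t - s) powr (-\<alpha>) * abel_integral \<alpha> gp s - (t - s) powr (-\<alpha>) * abel_integral \<alpha> gn s)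
      has_integral Beta \<alpha> (1 - \<alpha>) * integral {0..t} h) {0..t}"
    unfolding I_split right_diff_distrib
    by (intro has_integral_diff has_integral_abel_integral_composition_nonneg a t gpc gnc)
       (simp_all add: gp_def gn_def)
  then show ?thesis
    by (rule has_integral_eq[rotated]) (simp add: A_split right_diff_distrib)
qed

lemma powr_diff_le_of_le:
  fixes \<alpha> \<rho> x y :: real
  assumes a: "0 < \<alpha>" "\<alpha> < 1" and \<rho>: "0 < \<rho>" "\<rho> \<le> x" and xy: "x \<le> y"
  shows "x powr (\<alpha> - 1) - y powr (\<alpha> - 1) \<le> (1 - \<alpha>) * \<rho> powr (\<alpha> - 2) * (y - x)"
proof (cases "x = y")
  case False
  with xy have "x < y" by simp
  then obtain z where z: "x < z" "z < y"
    and eq: "y powr (\<alpha> - 1) - x powr (\<alpha> - 1) = (y - x) * ((\<alpha> - 1) * z powr (\<alpha> - 1 - 1))"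
    using MVT2[of x y "\<lambda>z. z powr (\<alpha> - 1)" "\<lambda>z. (\<alpha> - 1) * z powr (\<alpha> - 1 - 1)"] \<rho>
    by (force intro!: derivative_eq_intros)
  have "z powr (\<alpha> - 2) \<le> \<rho> powr (\<alpha> - 2)"
    using z \<rho> a by (intro powr_mono2') auto
  then have "(y - x) * ((1 - \<alpha>) * z powr (\<alpha> - 2)) \<le> (y - x) * ((1 - \<alpha>) * \<rho> powr (\<alpha> - 2))"
    using xy a by (intro mult_left_mono) auto
  with eq show ?thesis by (simp add: algebra_simps)
qed simp

lemma powr_one_minus_diff_ge:
  fixes \<alpha> \<tau> t :: real
  assumes a: "0 < \<alpha>" "\<alpha> < 1" and \<tau>: "0 < \<tau>" "\<tau> \<le> t"
  shows "t powr (-\<alpha>) * (t - \<tau>) \<le> (t powr (1 - \<alpha>) - \<tau> powr (1 - \<alpha>)) / (1 - \<alpha>)"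
proof (cases "\<tau> = t")
  case False
  with \<tau> have "\<tau> < t" by simp
  then obtain z where z: "\<tau> < z" "z < t"
    and eq: "t powr (1 - \<alpha>) - \<tau> powr (1 - \<alpha>) = (t - \<tau>) * ((1 - \<alpha>) * z powr (1 - \<alpha> - 1))"
    using MVT2[of \<tau> t "\<lambda>z. z powr (1 - \<alpha>)" "\<lambda>z. (1 - \<alpha>) * z powr (1 - \<alpha> - 1)"] \<tau>
    by (force intro!: derivative_eq_intros)
  have "t powr (-\<alpha>) \<le> z powr (-\<alpha>)" using z \<tau> a by (intro powr_mono2') auto
  then have "t powr (-\<alpha>) * (t - \<tau>) \<le> z powr (-\<alpha>) * (t - \<tau>)" using \<tau> by (intro mult_right_mono) auto
  also have "\<dots> = (t powr (1 - \<alpha>) - \<tau> powr (1 - \<alpha>)) / (1 - \<alpha>)"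
    using eq a by (simp add: field_simps)
  finally show ?thesis .
qed simp

lemma abel_integral_increment_split:
  fixes \<alpha> c s t :: real and h :: "real \<Rightarrow> real"
  assumes "0 < \<alpha>" "0 \<le> c" "c \<le> s" "s \<le> t" and hc: "continuous_on {0..t} h"
  shows "abel_integral \<alpha> h s - abel_integral \<alpha> h t =
      integral {0..c} (\<lambda>r. ((s - r) powr (\<alpha> - 1) - (t - r) powr (\<alpha> - 1)) * h r)
    + integral {c..s} (\<lambda>r. ((s - r) powr (\<alpha> - 1) - (t - r) powr (\<alpha> - 1)) * h r)
    - integral {s..t} (\<lambda>r. (t - r) powr (\<alpha> - 1) * h r)"
proof -
  have "0 \<le> t" using assms by linarith
  then have int_t: "(\<lambda>r. (t - r) powr (\<alpha> - 1) * h r) integrable_on {0..t}"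
    using has_integral_abel_integral[OF assms(1) _ hc] by blast
  then have int_ts: "(\<lambda>r. (t - r) powr (\<alpha> - 1) * h r) integrable_on {0..s}"
    by (rule integrable_subinterval_real) (use assms in auto)
  have "0 \<le> s" "{0..s} \<subseteq> {0..t}" using assms by auto
  then have int_s: "(\<lambda>r. (s - r) powr (\<alpha> - 1) * h r) integrable_on {0..s}"
    using has_integral_abel_integral[OF assms(1) _ continuous_on_subset[OF hc]] by blast
  have "(\<lambda>r. ((s - r) powr (\<alpha> - 1) - (t - r) powr (\<alpha> - 1)) * h r) integrable_on {0..s}"
    unfolding left_diff_distrib by (rule integrable_diff[OF int_s int_ts])
  then have "integral {0..s} (\<lambda>r. ((s - r) powr (\<alpha> - 1) - (t - r) powr (\<alpha> - 1)) * h r)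
      = integral {0..c} (\<lambda>r. ((s - r) powr (\<alpha> - 1) - (t - r) powr (\<alpha> - 1)) * h r)
      + integral {c..s} (\<lambda>r. ((s - r) powr (\<alpha> - 1) - (t - r) powr (\<alpha> - 1)) * h r)"
    using assms by (intro Henstock_Kurzweil_Integration.integral_combine[symmetric]) auto
  moreover have "integral {0..s} (\<lambda>r. ((s - r) powr (\<alpha> - 1) - (t - r) powr (\<alpha> - 1)) * h r)
      = abel_integral \<alpha> h s - integral {0..s} (\<lambda>r. (t - r) powr (\<alpha> - 1) * h r)"
    unfolding abel_integral_def left_diff_distrib by (rule integral_diff[OF int_s int_ts])
  moreover have "abel_integral \<alpha> h t = integral {0..s} (\<lambda>r. (t - r) powr (\<alpha> - 1) * h r)
      + integral {s..t} (\<lambda>r. (t - r) powr (\<alpha> - 1) * h r)"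
    unfolding abel_integral_def using assms
    by (intro Henstock_Kurzweil_Integration.integral_combine[symmetric] int_t) auto
  ultimately show ?thesis by linarith
qed

lemma abs_integral_abel_kernel_tail_le:
  fixes \<alpha> s t m :: real and h :: "real \<Rightarrow> real"
  assumes "0 < \<alpha>" "s \<le> t" "continuous_on {s..t} h" "\<And>r. r \<in> {s..t} \<Longrightarrow> \<bar>h r\<bar> \<le> m"
  shows "\<bar>integral {s..t} (\<lambda>r. (t - r) powr (\<alpha> - 1) * h r)\<bar> \<le> (t - s) powr \<alpha> / \<alpha> * m"
  using assms by (intro abs_integral_nonneg_mult_le has_integral_kernel_powr_endpoint) auto

lemma abs_integral_abel_kernel_difference_le:
  fixes \<alpha> c s t m :: real and h :: "real \<Rightarrow> real"
  assumes a: "0 < \<alpha>" "\<alpha> < 1" and "c \<le> s" "s \<le> t" and hc: "continuous_on {c..s} h"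
    and h_bound: "\<And>r. r \<in> {c..s} \<Longrightarrow> \<bar>h r\<bar> \<le> m"
  shows "\<bar>integral {c..s} (\<lambda>r. ((s - r) powr (\<alpha> - 1) - (t - r) powr (\<alpha> - 1)) * h r)\<bar>
    \<le> (t - s) powr \<alpha> / \<alpha> * m"
proof -
  define K where "K = ((s - c) powr \<alpha> - (t - c) powr \<alpha> + (t - s) powr \<alpha>) / \<alpha>"
  have "((\<lambda>r. (s - r) powr (\<alpha> - 1) - (t - r) powr (\<alpha> - 1)) has_integral K) {c..s}"
    using has_integral_diff[OF has_integral_kernel_powr[of c s s \<alpha>] has_integral_kernel_powr[of c s t \<alpha>]]
      assms
    by (simp add: K_def diff_divide_distrib add_divide_distrib algebra_simps)
  \<comment> \<open>the kernel difference is nonnegative except at \<open>r = s\<close>, where \<open>0 powr (\<alpha> - 1) = 0\<close>\<close>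
  then have K: "((\<lambda>r. if r = s then 0 else (s - r) powr (\<alpha> - 1) - (t - r) powr (\<alpha> - 1))
      has_integral K) {c..s}"
    by (rule has_integral_spike[OF negligible_sing, rotated]) auto
  have "\<bar>integral {c..s} (\<lambda>r. (if r = s then 0 else (s - r) powr (\<alpha> - 1) - (t - r) powr (\<alpha> - 1)) * h r)\<bar>
      \<le> K * m"
    using assms by (intro abs_integral_nonneg_mult_le[OF hc K _ h_bound]) (auto intro!: powr_mono2')
  moreover have "integral {c..s} (\<lambda>r. ((s - r) powr (\<alpha> - 1) - (t - r) powr (\<alpha> - 1)) * h r)
      = integral {c..s} (\<lambda>r. (if r = s then 0 else (s - r) powr (\<alpha> - 1) - (t - r) powr (\<alpha> - 1)) * h r)"
    by (rule integral_spike[OF negligible_sing[of s]]) auto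
  moreover have "K * m \<le> (t - s) powr \<alpha> / \<alpha> * m"
  proof (rule mult_right_mono)
    show "K \<le> (t - s) powr \<alpha> / \<alpha>"
      using assms powr_mono2[of \<alpha> "s - c" "t - c"] by (simp add: K_def divide_right_mono)
    show "0 \<le> m" using h_bound[of s] assms(3) by force
  qed
  ultimately show ?thesis by linarith
qed

lemma abs_integral_abel_kernel_difference_far_le:
  fixes \<alpha> c s t M :: real and h :: "real \<Rightarrow> real"
  assumes a: "0 < \<alpha>" "\<alpha> < 1" and "0 \<le> c" "c < s" "s \<le> t" and hc: "continuous_on {0..c} h"
    and h_bound: "\<And>r. r \<in> {0..c} \<Longrightarrow> \<bar>h r\<bar> \<le> M"
  shows "\<bar>integral {0..c} (\<lambda>r. ((s - r) powr (\<alpha> - 1) - (t - r) powr (\<alpha> - 1)) * h r)\<bar>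
    \<le> M * ((1 - \<alpha>) * (s - c) powr (\<alpha> - 2) * (t - s)) * c"
proof -
  have "continuous_on {0..c} (\<lambda>r. ((s - r) powr (\<alpha> - 1) - (t - r) powr (\<alpha> - 1)) * h r)"
    using assms by (intro continuous_intros continuous_on_powr' hc) auto
  then have "norm (integral {0..c} (\<lambda>r. ((s - r) powr (\<alpha> - 1) - (t - r) powr (\<alpha> - 1)) * h r))
      \<le> M * ((1 - \<alpha>) * (s - c) powr (\<alpha> - 2) * (t - s)) * (c - 0)"
  proof (rule integral_bound[OF \<open>0 \<le> c\<close>])
    fix r assume r: "r \<in> {0..c}"
    have "(s - r) powr (\<alpha> - 1) - (t - r) powr (\<alpha> - 1) \<le> (1 - \<alpha>) * (s - c) powr (\<alpha> - 2) * (t - s)"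
      using powr_diff_le_of_le[OF a, of "s - c" "s - r" "t - r"] r assms by simp
    moreover have "0 \<le> (s - r) powr (\<alpha> - 1) - (t - r) powr (\<alpha> - 1)"
      using r assms by (simp add: powr_mono2')
    ultimately show "norm (((s - r) powr (\<alpha> - 1) - (t - r) powr (\<alpha> - 1)) * h r)
        \<le> M * ((1 - \<alpha>) * (s - c) powr (\<alpha> - 2) * (t - s))"
      using h_bound[OF r] by (simp add: abs_mult mult.commute mult_mono)
  qed
  then show ?thesis using assms by simp
qed

lemma linear_le_powr_near_zero:
  fixes \<alpha> C K \<epsilon> :: real
  assumes "\<alpha> < 1" "0 < C" "0 < K" "0 < \<epsilon>" "\<epsilon> < (K / C) powr (1 / (1 - \<alpha>))"
  shows "C * \<epsilon> \<le> K * \<epsilon> powr \<alpha>"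
proof -
  have "\<epsilon> powr (1 - \<alpha>) < ((K / C) powr (1 / (1 - \<alpha>))) powr (1 - \<alpha>)"
    using assms by (intro powr_less_mono2) auto
  also have "\<dots> = K / C" using assms by (simp add: powr_powr)
  finally have "C * \<epsilon> powr (1 - \<alpha>) \<le> K"
    using assms by (simp add: field_simps)
  then have "C * \<epsilon> powr (1 - \<alpha>) * \<epsilon> powr \<alpha> \<le> K * \<epsilon> powr \<alpha>"
    by (rule mult_right_mono) simp
  then show ?thesis
    using assms by (simp add: mult.assoc powr_add[symmetric])
qed

text \<open>Near a zero of \<open>h\<close> the increments of \<open>abel_integral \<alpha> h\<close> are \<open>o((t - s)\<^sup>\<alpha>)\<close>: the
  part of \<open>h\<close> far from \<open>t\<close> only contributes \<open>O(t - s)\<close>, and near \<open>t\<close> the factor \<open>h\<close> is small.\<close>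

lemma abel_integral_endpoint_estimate:
  fixes \<alpha> t \<eta> :: real and h :: "real \<Rightarrow> real"
  assumes a: "0 < \<alpha>" "\<alpha> < 1" and t: "0 \<le> t" and hc: "continuous_on {0..t} h"
    and h_t: "h t = 0" and \<eta>: "0 < \<eta>"
  shows "\<exists>\<delta>>0. \<forall>s\<in>{0..t}. t - s < \<delta> \<longrightarrow>
    \<bar>abel_integral \<alpha> h s - abel_integral \<alpha> h t\<bar> \<le> \<eta> * (t - s) powr \<alpha>"
proof -
  obtain M0 where "\<forall>y\<in>h ` {0..t}. \<bar>y\<bar> \<le> M0"
    using compact_imp_bounded[OF compact_continuous_image[OF hc compact_Icc]]
    unfolding bounded_real by blast
  then obtain M where M: "\<And>r. r \<in> {0..t} \<Longrightarrow> \<bar>h r\<bar> \<le> M" "0 \<le> M"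
    by (metis image_eqI abs_ge_zero max.coboundedI1 max.coboundedI2 order.trans)
  define \<eta>1 where "\<eta>1 = \<eta> * \<alpha> / 4"
  have "0 < \<eta>1" using \<eta> a by (simp add: \<eta>1_def)
  then obtain \<rho>0 where "0 < \<rho>0"
    and \<rho>0: "\<And>r. r \<in> {0..t} \<Longrightarrow> dist r t < \<rho>0 \<Longrightarrow> dist (h r) (h t) < \<eta>1"
    using hc t unfolding continuous_on_iff by (metis atLeastAtMost_iff order.refl)
  define \<rho> where "\<rho> = \<rho>0 / 3"
  have \<rho>: "0 < \<rho>" using \<open>0 < \<rho>0\<close> by (simp add: \<rho>_def)
  have h_small: "\<bar>h r\<bar> \<le> \<eta>1" if "r \<in> {0..t}" "t - r \<le> 2 * \<rho>" for r
    using \<rho>0[OF that(1)] that \<open>0 < \<rho>0\<close> by (simp add: dist_real_def \<rho>_def h_t)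
  define C where "C = M * (1 - \<alpha>) * \<rho> powr (\<alpha> - 2) * t + 1"
  have C: "1 \<le> C" unfolding C_def using M(2) t a by simp
  define \<delta> where "\<delta> = min \<rho> ((\<eta> / 2 / C) powr (1 / (1 - \<alpha>)))"
  have "0 < \<delta>" using \<rho> \<eta> C by (simp add: \<delta>_def)
  moreover have "\<bar>abel_integral \<alpha> h s - abel_integral \<alpha> h t\<bar> \<le> \<eta> * (t - s) powr \<alpha>"
    if s: "s \<in> {0..t}" "t - s < \<delta>" for s
  proof (cases "s = t")
    case False
    define \<epsilon> where "\<epsilon> = t - s"
    have \<epsilon>: "0 < \<epsilon>" "\<epsilon> < \<rho>" using s False by (auto simp: \<epsilon>_def \<delta>_def)
    define c where "c = max 0 (s - \<rho>)"
    have c: "0 \<le> c" "c \<le> s" using s \<rho> by (auto simp: c_def)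
    have far: "\<bar>integral {0..c} (\<lambda>r. ((s - r) powr (\<alpha> - 1) - (t - r) powr (\<alpha> - 1)) * h r)\<bar>
        \<le> (C - 1) * \<epsilon>"
    proof (cases "c = 0")
      case False
      then have "c = s - \<rho>" by (simp add: c_def)
      then have "\<bar>integral {0..c} (\<lambda>r. ((s - r) powr (\<alpha> - 1) - (t - r) powr (\<alpha> - 1)) * h r)\<bar>
          \<le> M * ((1 - \<alpha>) * \<rho> powr (\<alpha> - 2) * \<epsilon>) * c"
        using abs_integral_abel_kernel_difference_far_le[OF a c(1), where s=s and t=t and M=M and h=h] c s \<rho> M
          continuous_on_subset[OF hc]
        by (simp add: \<epsilon>_def)
      also have "\<dots> \<le> M * ((1 - \<alpha>) * \<rho> powr (\<alpha> - 2) * \<epsilon>) * t"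
        using c s M(2) a \<epsilon> by (intro mult_left_mono) auto
      finally show ?thesis by (simp add: C_def mult_ac)
    qed (use C \<epsilon> in simp)
    have near: "\<bar>integral {c..s} (\<lambda>r. ((s - r) powr (\<alpha> - 1) - (t - r) powr (\<alpha> - 1)) * h r)\<bar>
        \<le> \<epsilon> powr \<alpha> / \<alpha> * \<eta>1"
      unfolding \<epsilon>_def
    proof (rule abs_integral_abel_kernel_difference_le[OF a c(2)])
      fix r assume "r \<in> {c..s}"
      then show "\<bar>h r\<bar> \<le> \<eta>1"
        using c s \<epsilon> by (intro h_small) (auto simp: c_def \<epsilon>_def)
    qed (use s c in \<open>auto intro: continuous_on_subset[OF hc]\<close>)
    have tail: "\<bar>integral {s..t} (\<lambda>r. (t - r) powr (\<alpha> - 1) * h r)\<bar> \<le> \<epsilon> powr \<alpha> / \<alpha> * \<eta>1"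
      unfolding \<epsilon>_def
    proof (rule abs_integral_abel_kernel_tail_le[OF a(1)])
      fix r assume "r \<in> {s..t}"
      then show "\<bar>h r\<bar> \<le> \<eta>1"
        using s \<epsilon> \<rho> by (intro h_small) (auto simp: \<epsilon>_def)
    qed (use s in \<open>auto intro: continuous_on_subset[OF hc]\<close>)
    define P where "P = \<eta> * \<epsilon> powr \<alpha>"
    have "C * \<epsilon> \<le> \<eta> / 2 * \<epsilon> powr \<alpha>"
      using a C \<eta> \<epsilon> s by (intro linear_le_powr_near_zero) (auto simp: \<epsilon>_def \<delta>_def)
    then have "(C - 1) * \<epsilon> \<le> P / 2 - \<epsilon>"
      by (simp add: P_def left_diff_distrib)
    moreover have "\<epsilon> powr \<alpha> / \<alpha> * \<eta>1 = P / 4"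
      using a by (simp add: P_def \<eta>1_def field_simps)
    moreover have "s \<le> t" using s by simp
    note split = abel_integral_increment_split[OF a(1) c this hc]
    ultimately show ?thesis
      unfolding split \<epsilon>_def[symmetric] P_def[symmetric] using far near tail \<epsilon> by linarith
  qed simp
  ultimately show ?thesis by (intro exI[of _ \<delta>]) auto
qed

lemma singular_integral_increment_le:
  fixes \<alpha> \<tau> t K P Q :: real and d :: "real \<Rightarrow> real"
  assumes a: "0 < \<alpha>" "\<alpha> < 1" and \<tau>: "0 \<le> \<tau>" "\<tau> \<le> t"
    and d_nonneg: "\<And>s. s \<in> {0..t} \<Longrightarrow> 0 \<le> d s" and d_le: "\<And>s. s \<in> {\<tau>..t} \<Longrightarrow> d s \<le> K"
    and P: "((\<lambda>s. (t - s) powr (-\<alpha>) * d s) has_integral P) {0..t}"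
    and Q: "((\<lambda>s. (\<tau> - s) powr (-\<alpha>) * d s) has_integral Q) {0..\<tau>}"
  shows "P - Q \<le> (t - \<tau>) powr (1 - \<alpha>) / (1 - \<alpha>) * K"
proof -
  have int_t: "(\<lambda>s. (t - s) powr (-\<alpha>) * d s) integrable_on {0..t}"
    using P by blast
  have "integral {0..\<tau>} (\<lambda>s. (t - s) powr (-\<alpha>) * d s) \<le> Q"
  proof (rule has_integral_le[OF integrable_integral has_integral_spike[OF negligible_sing _ Q]])
    show "(\<lambda>s. (t - s) powr (-\<alpha>) * d s) integrable_on {0..\<tau>}"
      by (rule integrable_subinterval_real[OF int_t]) (use \<tau> in auto)
    fix s assume s: "s \<in> {0..\<tau>}"
    show "(t - s) powr (-\<alpha>) * d s \<le>
        (if s = \<tau> then (t - s) powr (-\<alpha>) * d s else (\<tau> - s) powr (-\<alpha>) * d s)"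
      using s \<tau> a d_nonneg[of s] by (auto intro!: mult_right_mono powr_mono2')
  qed auto
  moreover have "integral {\<tau>..t} (\<lambda>s. (t - s) powr (-\<alpha>) * d s) \<le> (t - \<tau>) powr (1 - \<alpha>) / (1 - \<alpha>) * K"
  proof (rule has_integral_le[OF integrable_integral has_integral_mult_left])
    show "(\<lambda>s. (t - s) powr (-\<alpha>) * d s) integrable_on {\<tau>..t}"
      by (rule integrable_subinterval_real[OF int_t]) (use \<tau> in auto)
    show "((\<lambda>s. (t - s) powr (-\<alpha>)) has_integral (t - \<tau>) powr (1 - \<alpha>) / (1 - \<alpha>)) {\<tau>..t}"
      using has_integral_kernel_powr_endpoint[of \<tau> t "1 - \<alpha>"] \<tau> a by simp
  qed (use d_le in \<open>auto intro: mult_left_mono\<close>)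
  moreover have "P = integral {0..\<tau>} (\<lambda>s. (t - s) powr (-\<alpha>) * d s)
      + integral {\<tau>..t} (\<lambda>s. (t - s) powr (-\<alpha>) * d s)"
    using Henstock_Kurzweil_Integration.integral_combine[OF \<tau> int_t] integral_unique[OF P] by simp
  ultimately show ?thesis by linarith
qed

lemma has_integral_singular_kernel_solution:
  fixes \<alpha> \<tau> :: real and h d :: "real \<Rightarrow> real"
  assumes a: "0 < \<alpha>" "\<alpha> < 1" and \<tau>: "0 \<le> \<tau>" and hc: "continuous_on {0..\<tau>} h"
    and abel: "\<And>t. t \<in> {0..\<tau>} \<Longrightarrow> abel_integral \<alpha> h t = Gamma \<alpha> * (d t - d 0)"
  shows "((\<lambda>s. (\<tau> - s) powr (-\<alpha>) * d s) has_integral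
    (Beta \<alpha> (1 - \<alpha>) * integral {0..\<tau>} h + Gamma \<alpha> * d 0 * (\<tau> powr (1 - \<alpha>) / (1 - \<alpha>))) / Gamma \<alpha>)
    {0..\<tau>}"
proof -
  have \<Gamma>: "0 < Gamma \<alpha>" using a by (simp add: Gamma_real_pos)
  have "((\<lambda>s. (\<tau> - s) powr (-\<alpha>) * abel_integral \<alpha> h s + Gamma \<alpha> * d 0 * (\<tau> - s) powr (-\<alpha>))
      has_integral Beta \<alpha> (1 - \<alpha>) * integral {0..\<tau>} h + Gamma \<alpha> * d 0 * (\<tau> powr (1 - \<alpha>) / (1 - \<alpha>)))
      {0..\<tau>}"
    using has_integral_kernel_powr_endpoint[of 0 \<tau> "1 - \<alpha>"] a \<tau>
    by (intro has_integral_add has_integral_abel_integral_composition a \<tau> hc has_integral_mult_right)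
       simp_all
  then have "((\<lambda>s. ((\<tau> - s) powr (-\<alpha>) * abel_integral \<alpha> h s + Gamma \<alpha> * d 0 * (\<tau> - s) powr (-\<alpha>))
      / Gamma \<alpha>) has_integral
      (Beta \<alpha> (1 - \<alpha>) * integral {0..\<tau>} h + Gamma \<alpha> * d 0 * (\<tau> powr (1 - \<alpha>) / (1 - \<alpha>))) / Gamma \<alpha>)
      {0..\<tau>}"
    by (rule has_integral_divide)
  then show ?thesis
  proof (rule has_integral_eq[rotated])
    fix s assume "s \<in> {0..\<tau>}"
    then show "((\<tau> - s) powr (-\<alpha>) * abel_integral \<alpha> h s + Gamma \<alpha> * d 0 * (\<tau> - s) powr (-\<alpha>))
        / Gamma \<alpha> = (\<tau> - s) powr (-\<alpha>) * d s"
      using \<Gamma> by (simp add: abel field_simps)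
  qed
qed

lemma abel_solution_endpoint_estimate:
  fixes \<alpha> t1 \<eta> :: real and h d :: "real \<Rightarrow> real"
  assumes a: "0 < \<alpha>" "\<alpha> < 1" and t1: "0 \<le> t1" and hc: "continuous_on {0..t1} h"
    and h_t1: "h t1 = 0" and d_t1: "d t1 = 0"
    and abel: "\<And>t. t \<in> {0..t1} \<Longrightarrow> abel_integral \<alpha> h t = Gamma \<alpha> * (d t - d 0)"
    and \<eta>: "0 < \<eta>"
  shows "\<exists>\<delta>>0. \<forall>s\<in>{0..t1}. t1 - s < \<delta> \<longrightarrow> \<bar>d s\<bar> \<le> \<eta> * (t1 - s) powr \<alpha>"
proof -
  have \<Gamma>: "0 < Gamma \<alpha>" using a by (simp add: Gamma_real_pos)
  obtain \<delta> where "0 < \<delta>" and \<delta>: "\<And>s. s \<in> {0..t1} \<Longrightarrow> t1 - s < \<delta> \<Longrightarrow>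
      \<bar>abel_integral \<alpha> h s - abel_integral \<alpha> h t1\<bar> \<le> Gamma \<alpha> * \<eta> * (t1 - s) powr \<alpha>"
    using abel_integral_endpoint_estimate[OF a t1 hc h_t1, of "Gamma \<alpha> * \<eta>"] \<Gamma> \<eta> by auto
  have "\<bar>d s\<bar> \<le> \<eta> * (t1 - s) powr \<alpha>" if "s \<in> {0..t1}" "t1 - s < \<delta>" for s
  proof -
    have "abel_integral \<alpha> h s - abel_integral \<alpha> h t1 = Gamma \<alpha> * d s"
      using abel[OF that(1)] abel[of t1] t1 d_t1 by (simp add: algebra_simps)
    then show ?thesis
      using \<delta>[OF that] \<Gamma> by (simp add: abs_mult mult.assoc)
  qed
  with \<open>0 < \<delta>\<close> show ?thesis by blast
qed

lemma nonneg_abel_solution_cannot_vanish: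
  fixes \<alpha> t1 :: real and h d :: "real \<Rightarrow> real"
  assumes a: "0 < \<alpha>" "\<alpha> < 1" and t1: "0 < t1" and hc: "continuous_on {0..t1} h"
    and h_t1: "h t1 = 0" and d_nonneg: "\<And>s. s \<in> {0..t1} \<Longrightarrow> 0 \<le> d s"
    and d_t1: "d t1 = 0" and d_0: "0 < d 0"
    and abel: "\<And>t. t \<in> {0..t1} \<Longrightarrow> abel_integral \<alpha> h t = Gamma \<alpha> * (d t - d 0)"
  shows False
proof -
  define \<Gamma> where "\<Gamma> = Gamma \<alpha>"
  define B where "B = Beta \<alpha> (1 - \<alpha>)"
  have \<Gamma>: "0 < \<Gamma>" using a by (simp add: \<Gamma>_def Gamma_real_pos)
  have B: "0 < B" using a by (simp add: B_def Beta_def Gamma_real_pos)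
  define P where "P \<tau> = (B * integral {0..\<tau>} h + \<Gamma> * d 0 * (\<tau> powr (1 - \<alpha>) / (1 - \<alpha>))) / \<Gamma>" for \<tau>
  have P: "((\<lambda>s. (\<tau> - s) powr (-\<alpha>) * d s) has_integral P \<tau>) {0..\<tau>}" if "\<tau> \<in> {0..t1}" for \<tau>
    unfolding P_def \<Gamma>_def B_def using that
    by (intro has_integral_singular_kernel_solution a continuous_on_subset[OF hc] abel) auto
  define c0 where "c0 = d 0 * t1 powr (-\<alpha>)"
  have c0: "0 < c0" using d_0 t1 by (simp add: c0_def)
  define \<eta> where "\<eta> = c0 * (1 - \<alpha>) / 4"
  define \<eta>' where "\<eta>' = \<Gamma> * c0 / (4 * B)"
  have \<eta>: "0 < \<eta>" "0 < \<eta>'" using c0 a \<Gamma> B by (simp_all add: \<eta>_def \<eta>'_def)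
  obtain \<delta>1 where "0 < \<delta>1"
    and d_small: "\<And>s. s \<in> {0..t1} \<Longrightarrow> t1 - s < \<delta>1 \<Longrightarrow> \<bar>d s\<bar> \<le> \<eta> * (t1 - s) powr \<alpha>"
    using abel_solution_endpoint_estimate[OF a _ hc h_t1 d_t1 abel \<eta>(1)] t1 by auto
  obtain \<delta>2 where "0 < \<delta>2"
    and \<delta>2: "\<And>s. s \<in> {0..t1} \<Longrightarrow> dist s t1 < \<delta>2 \<Longrightarrow> dist (h s) (h t1) < \<eta>'"
    using hc \<eta> t1 unfolding continuous_on_iff by (metis atLeastAtMost_iff less_le order.refl)
  define \<epsilon> where "\<epsilon> = min (min \<delta>1 \<delta>2) t1 / 2"
  have \<epsilon>: "0 < \<epsilon>" "\<epsilon> < \<delta>1" "\<epsilon> < \<delta>2" "\<epsilon> < t1"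
    using \<open>0 < \<delta>1\<close> \<open>0 < \<delta>2\<close> t1 by (auto simp: \<epsilon>_def)
  define \<tau> where "\<tau> = t1 - \<epsilon>"
  have \<tau>: "0 < \<tau>" "\<tau> \<le> t1" using \<epsilon> by (auto simp: \<tau>_def)
  define E where "E = \<Gamma> * c0 * \<epsilon>"
  have "P t1 - P \<tau> \<le> (t1 - \<tau>) powr (1 - \<alpha>) / (1 - \<alpha>) * (\<eta> * \<epsilon> powr \<alpha>)"
  proof (rule singular_integral_increment_le[OF a _ \<tau>(2) d_nonneg _ P P])
    fix s assume s: "s \<in> {\<tau>..t1}"
    then have "d s \<le> \<eta> * (t1 - s) powr \<alpha>" using \<epsilon> \<tau> d_small[of s] by (auto simp: \<tau>_def)
    also have "\<dots> \<le> \<eta> * \<epsilon> powr \<alpha>"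
      using s \<eta> a by (intro mult_left_mono powr_mono2) (auto simp: \<tau>_def)
    finally show "d s \<le> \<eta> * \<epsilon> powr \<alpha>" .
  qed (use \<tau> t1 in auto)
  also have "\<dots> = \<eta> * \<epsilon> / (1 - \<alpha>)"
    using \<epsilon> by (simp add: \<tau>_def mult.commute mult.left_commute powr_add[symmetric])
  also have "\<dots> = c0 * \<epsilon> / 4"
    using a by (simp add: \<eta>_def field_simps)
  finally have upper: "\<Gamma> * P t1 - \<Gamma> * P \<tau> \<le> E / 4"
    using \<Gamma> mult_left_mono[of _ _ \<Gamma>] by (fastforce simp: E_def right_diff_distrib)
  have "integral {\<tau>..t1} h \<ge> - (\<eta>' * \<epsilon>)"
  proof -
    have "norm (integral {\<tau>..t1} h) \<le> \<eta>' * (t1 - \<tau>)"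
    proof (rule integral_bound[OF \<tau>(2) continuous_on_subset[OF hc]])
      fix s assume "s \<in> {\<tau>..t1}"
      then show "norm (h s) \<le> \<eta>'"
        using \<delta>2[of s] \<epsilon> \<tau> h_t1 by (auto simp: dist_real_def \<tau>_def)
    qed (use \<tau> in auto)
    then show ?thesis by (simp add: \<tau>_def)
  qed
  then have h_part: "B * integral {\<tau>..t1} h \<ge> - E / 4"
    using B mult_left_mono[of "- (\<eta>' * \<epsilon>)" _ B] by (simp add: E_def \<eta>'_def field_simps)
  have "\<Gamma> * d 0 * (t1 powr (-\<alpha>) * (t1 - \<tau>)) \<le> \<Gamma> * d 0 * ((t1 powr (1 - \<alpha>) - \<tau> powr (1 - \<alpha>)) / (1 - \<alpha>))"
    using powr_one_minus_diff_ge[OF a \<tau>] \<Gamma> d_0 by (intro mult_left_mono) auto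
  then have d0_part: "\<Gamma> * d 0 * (t1 powr (1 - \<alpha>) / (1 - \<alpha>))
      - \<Gamma> * d 0 * (\<tau> powr (1 - \<alpha>) / (1 - \<alpha>)) \<ge> E"
    by (simp add: E_def c0_def \<tau>_def mult_ac diff_divide_distrib right_diff_distrib)
  have "integral {0..t1} h = integral {0..\<tau>} h + integral {\<tau>..t1} h"
    using Henstock_Kurzweil_Integration.integral_combine[of 0 \<tau> t1 h] \<tau>
      integrable_continuous_interval[OF hc] by simp
  then have "B * integral {0..t1} h = B * integral {0..\<tau>} h + B * integral {\<tau>..t1} h"
    by (simp add: distrib_left)
  moreover have \<Gamma>P: "\<Gamma> * P x = B * integral {0..x} h + \<Gamma> * d 0 * (x powr (1 - \<alpha>) / (1 - \<alpha>))"
    for x using \<Gamma> by (simp add: P_def)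
  moreover have "0 < E" using \<Gamma> c0 \<epsilon> by (simp add: E_def)
  ultimately show False using upper h_part d0_part \<Gamma>P[of t1] \<Gamma>P[of \<tau>] by linarith
qed

lemma first_zero_after_positive_start:
  fixes D :: "real \<Rightarrow> real" and t :: real
  assumes "0 \<le> t" and Dc: "continuous_on {0..t} D" and D_0: "0 < D 0" and D_t: "D t = 0"
  obtains t1 where "0 < t1" "t1 \<le> t" "D t1 = 0" "\<And>s. s \<in> {0..t1} \<Longrightarrow> 0 \<le> D s"
proof -
  define Z where "Z = {s \<in> {0..t}. D s = 0}"
  have "closed Z" unfolding Z_def
    by (rule continuous_closed_preimage_constant[OF Dc]) auto
  moreover have "t \<in> Z" using \<open>0 \<le> t\<close> D_t by (simp add: Z_def)
  moreover have bdd: "bdd_below Z" by (auto simp: Z_def bdd_below_def)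
  ultimately have "Inf Z \<in> Z" by (intro closed_contains_Inf) auto
  then have t1: "0 \<le> Inf Z" "Inf Z \<le> t" "D (Inf Z) = 0" by (auto simp: Z_def)
  have first: "D s \<noteq> 0" if "0 \<le> s" "s < Inf Z" for s
    using cInf_lower[OF _ bdd, of s] that t1 by (force simp: Z_def)
  show ?thesis
  proof (rule that[OF _ t1(2,3)])
    show "0 < Inf Z" using t1 D_0 by (cases "Inf Z = 0") auto
    fix s assume s: "s \<in> {0..Inf Z}"
    show "0 \<le> D s"
    proof (rule ccontr)
      assume "\<not> 0 \<le> D s"
      moreover have "continuous_on {0..s} D"
        by (rule continuous_on_subset[OF Dc]) (use s t1 in auto)
      ultimately obtain z where "0 \<le> z" "z \<le> s" "D z = 0"
        using IVT2'[of D s 0 0] D_0 s by auto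
      with first[of z] s t1 \<open>\<not> 0 \<le> D s\<close> show False by (cases "z = Inf Z") auto
    qed
  qed
qed

lemma abel_integral_caputo_solution_diff:
  assumes "caputo_solution \<alpha> f J x1" "caputo_solution \<alpha> f J x2" "\<tau> \<in> J"
  shows "abel_integral \<alpha> (\<lambda>s. f s (x1 s) - f s (x2 s)) \<tau>
    = Gamma \<alpha> * ((x1 \<tau> - x2 \<tau>) - (x1 0 - x2 0))"
proof -
  have "((\<lambda>s. (\<tau> - s) powr (\<alpha> - 1) * f s (x1 s) - (\<tau> - s) powr (\<alpha> - 1) * f s (x2 s))
      has_integral Gamma \<alpha> * (x1 \<tau> - x1 0) - Gamma \<alpha> * (x2 \<tau> - x2 0)) {0..\<tau>}"
    using assms by (intro has_integral_diff) (auto simp: caputo_solution_def)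
  then show ?thesis
    unfolding abel_integral_def by (simp add: integral_unique right_diff_distrib algebra_simps)
qed

lemma caputo_solutions_ordered_never_meet:
  fixes \<alpha> T :: real and J :: "real set" and f :: "real \<Rightarrow> real \<Rightarrow> real" and x1 x2 :: "real \<Rightarrow> real"
  assumes a: "0 < \<alpha>" "\<alpha> < 1"
    and J: "(0 < T \<and> J = {0..T}) \<or> J = {0..}"
    and f_cont: "continuous_on (J \<times> UNIV) (\<lambda>(t, x). f t x)"
    and sol1: "caputo_solution \<alpha> f J x1" and sol2: "caputo_solution \<alpha> f J x2"
    and init: "x2 0 < x1 0" and t: "t \<in> J"
  shows "x1 t \<noteq> x2 t"
proof
  assume meet: "x1 t = x2 t"
  have J_interval: "{0..s} \<subseteq> J" if "s \<in> J" for s using J that by auto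
  have xc: "continuous_on J x1" "continuous_on J x2"
    using sol1 sol2 by (auto simp: caputo_solution_def)
  have "0 \<le> t" using J t by auto
  moreover have "continuous_on {0..t} (\<lambda>s. x1 s - x2 s)"
    using xc J_interval[OF t] by (auto intro!: continuous_intros intro: continuous_on_subset)
  ultimately obtain t1 where t1: "0 < t1" "t1 \<le> t" "x1 t1 - x2 t1 = 0"
    and nonneg: "\<And>s. s \<in> {0..t1} \<Longrightarrow> 0 \<le> x1 s - x2 s"
    by (rule first_zero_after_positive_start) (use init meet in auto)
  have sub: "{0..t1} \<subseteq> J" using J_interval[OF t] t1 by auto
  have "continuous_on J (\<lambda>s. f s (x s))" if "continuous_on J x" for x
  proof -
    have "continuous_on J (\<lambda>s. (s, x s))" using that by (intro continuous_intros)
    then show ?thesis using continuous_on_compose2[OF f_cont, of J "\<lambda>s. (s, x s)"] by auto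
  qed
  then have "continuous_on {0..t1} (\<lambda>s. f s (x1 s) - f s (x2 s))"
    using xc sub by (auto intro!: continuous_intros intro: continuous_on_subset)
  then show False
    using sub t1 nonneg init
    by (intro nonneg_abel_solution_cannot_vanish[OF a t1(1),
          of "\<lambda>s. f s (x1 s) - f s (x2 s)" "\<lambda>s. x1 s - x2 s"])
       (auto simp: abel_integral_caputo_solution_diff[OF sol1 sol2])
qed

theorem mainTheorem1:
  fixes \<alpha> T :: real and J :: "real set"
    and f :: "real \<Rightarrow> real \<Rightarrow> real" and L :: "real \<Rightarrow> real"
    and x1 x2 :: "real \<Rightarrow> real"
  assumes alpha: "0 < \<alpha>" "\<alpha> < 1"
    and J: "(0 < T \<and> J = {0..T}) \<or> J = {0..}"
    and f_cont: "continuous_on (J \<times> UNIV) (\<lambda>(t, x). f t x)"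
    and L_cont: "continuous_on J L"
    and L_nonneg: "\<And>t. t \<in> J \<Longrightarrow> 0 \<le> L t"
    and lip: "\<And>t x y. t \<in> J \<Longrightarrow> \<bar>f t x - f t y\<bar> \<le> L t * \<bar>x - y\<bar>"
    and sol1: "caputo_solution \<alpha> f J x1"
    and sol2: "caputo_solution \<alpha> f J x2"
    and init: "x1 0 \<noteq> x2 0"
  shows "\<forall>t\<in>J. x1 t \<noteq> x2 t"
proof
  fix t assume "t \<in> J"
  show "x1 t \<noteq> x2 t"
  proof (cases "x2 0 < x1 0")
    case True
    then show ?thesis
      using caputo_solutions_ordered_never_meet[OF alpha J f_cont sol1 sol2 _ \<open>t \<in> J\<close>] by blast
  next
    case False
    with init have "x1 0 < x2 0" by simp
    then show ?thesis
      using caputo_solutions_ordered_never_meet[OF alpha J f_cont sol2 sol1 _ \<open>t \<in> J\<close>] by auto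
  qed
qed

end
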